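(* For a graph $G$, $\gamma_{(2,1,0)}(G)=3$ if and only if $\gamma_{\times2}(G)=\gamma(G)+1=3$.
   Context: All graphs are finite and simple; $N(v)$ is the open neighbourhood and $N[v]=N(v)\cup\{v\}$. $\gamma_{(2,1,0)}(G)$ is the minimum of $\sum_v f(v)$ over functions $f:V(G)\to\{0,1,2\}$ such that $\sum_{u\in N(v)}f(u)\ge2$ whenever $f(v)=0$ and $\sum_{u\in N(v)}f(u)\ge1$ whenever $f(v)=1$. $\gamma(G)$ is the domination number and $\gamma_{\times2}(G)$ is the minimum size of $D\subseteq V(G)$ with $|N[v]\cap D|\ge2$ for every $v\in V(G)$ (defined when $G$ has no isolated vertex). *)

theory Defs
  imports Main
begin

definition simple_graph :: "'a set \<Rightarrow> ('a \<Rightarrow> 'a \<Rightarrow> bool) \<Rightarrow> bool" where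
  "simple_graph V E \<longleftrightarrow> finite V \<and> (\<forall>u v. E u v \<longrightarrow> E v u)
     \<and> (\<forall>v. \<not> E v v) \<and> (\<forall>u v. E u v \<longrightarrow> u \<in> V \<and> v \<in> V)"

definition open_nbhd :: "'a set \<Rightarrow> ('a \<Rightarrow> 'a \<Rightarrow> bool) \<Rightarrow> 'a \<Rightarrow> 'a set" where
  "open_nbhd V E v = {u \<in> V. E v u}"

definition closed_nbhd :: "'a set \<Rightarrow> ('a \<Rightarrow> 'a \<Rightarrow> bool) \<Rightarrow> 'a \<Rightarrow> 'a set" where
  "closed_nbhd V E v = insert v (open_nbhd V E v)"

definition no_isolated :: "'a set \<Rightarrow> ('a \<Rightarrow> 'a \<Rightarrow> bool) \<Rightarrow> bool" where
  "no_isolated V E \<longleftrightarrow> (\<forall>v\<in>V. open_nbhd V E v \<noteq> {})"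

definition dominating_set :: "'a set \<Rightarrow> ('a \<Rightarrow> 'a \<Rightarrow> bool) \<Rightarrow> 'a set \<Rightarrow> bool" where
  "dominating_set V E D \<longleftrightarrow> D \<subseteq> V \<and> (\<forall>v\<in>V. closed_nbhd V E v \<inter> D \<noteq> {})"

definition domination_number :: "'a set \<Rightarrow> ('a \<Rightarrow> 'a \<Rightarrow> bool) \<Rightarrow> nat" where
  "domination_number V E = (LEAST k. \<exists>D. dominating_set V E D \<and> card D = k)"

definition double_dominating_set :: "'a set \<Rightarrow> ('a \<Rightarrow> 'a \<Rightarrow> bool) \<Rightarrow> 'a set \<Rightarrow> bool" where
  "double_dominating_set V E D \<longleftrightarrow> D \<subseteq> V \<and> (\<forall>v\<in>V. card (closed_nbhd V E v \<inter> D) \<ge> 2)"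

text \<open>Double domination number; only meaningful when there is no isolated vertex.\<close>
definition double_domination_number :: "'a set \<Rightarrow> ('a \<Rightarrow> 'a \<Rightarrow> bool) \<Rightarrow> nat" where
  "double_domination_number V E = (LEAST k. \<exists>D. double_dominating_set V E D \<and> card D = k)"

definition dom210_function :: "'a set \<Rightarrow> ('a \<Rightarrow> 'a \<Rightarrow> bool) \<Rightarrow> ('a \<Rightarrow> nat) \<Rightarrow> bool" where
  "dom210_function V E f \<longleftrightarrow> (\<forall>v\<in>V. f v \<le> 2
      \<and> (f v = 0 \<longrightarrow> (\<Sum>u\<in>open_nbhd V E v. f u) \<ge> 2)
      \<and> (f v = 1 \<longrightarrow> (\<Sum>u\<in>open_nbhd V E v. f u) \<ge> 1))"

definition dom210_number :: "'a set \<Rightarrow> ('a \<Rightarrow> 'a \<Rightarrow> bool) \<Rightarrow> nat" where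
  "dom210_number V E = (LEAST w. \<exists>f. dom210_function V E f \<and> (\<Sum>v\<in>V. f v) = w)"

end

theory Submission
  imports Defs
begin

text \<open>A function \<open>f : V \<rightarrow> {0,1,2}\<close> is (2,1,0)-dominating exactly when every closed
  neighbourhood has weight at least 2. So the indicator of a double dominating set and twice the
  indicator of a dominating set are (2,1,0)-dominating, whence \<open>\<gamma>\<^sub>2\<^sub>1\<^sub>0 \<le> \<gamma>\<^sub>\<times>\<^sub>2\<close> and
  \<open>\<gamma>\<^sub>2\<^sub>1\<^sub>0 \<le> 2\<gamma>\<close>. Conversely, let \<open>f\<close> have weight at most 3. If \<open>f a = 2\<close>, the remaining
  vertices have weight at most 1, so every closed neighbourhood contains \<open>a\<close> and \<open>\<gamma> = 1\<close>;
  otherwise \<open>f\<close> is the indicator of a double dominating set whose size is the weight of \<open>f\<close>.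
  Removing one vertex from a double dominating set leaves a dominating set, so \<open>\<gamma> < \<gamma>\<^sub>\<times>\<^sub>2\<close>.\<close>

lemma finite_open_nbhd:
  "simple_graph V E \<Longrightarrow> finite (open_nbhd V E v)"
  unfolding simple_graph_def open_nbhd_def by simp

lemma not_in_open_nbhd:
  "simple_graph V E \<Longrightarrow> v \<notin> open_nbhd V E v"
  unfolding simple_graph_def open_nbhd_def by simp

lemma closed_nbhd_subset:
  "v \<in> V \<Longrightarrow> closed_nbhd V E v \<subseteq> V"
  unfolding closed_nbhd_def open_nbhd_def by auto

lemma sum_closed_nbhd:
  fixes f :: "'a \<Rightarrow> 'b::comm_monoid_add"
  assumes "simple_graph V E"
  shows "(\<Sum>u\<in>closed_nbhd V E v. f u) = f v + (\<Sum>u\<in>open_nbhd V E v. f u)"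
  unfolding closed_nbhd_def
  using assms by (simp add: finite_open_nbhd not_in_open_nbhd)

lemma sum_of_bool_closed_nbhd:
  "simple_graph V E \<Longrightarrow> (\<Sum>u\<in>closed_nbhd V E v. of_bool (u \<in> D)) = card (closed_nbhd V E v \<inter> D)"
  unfolding closed_nbhd_def by (simp add: finite_open_nbhd sum_of_bool_eq Collect_mem_eq)

lemma dom210_function_iff_closed_nbhd_sum:
  assumes "simple_graph V E"
  shows "dom210_function V E f \<longleftrightarrow> (\<forall>v\<in>V. f v \<le> 2 \<and> (\<Sum>u\<in>closed_nbhd V E v. f u) \<ge> 2)"
  unfolding dom210_function_def sum_closed_nbhd[OF assms]
  by (intro ball_cong refl) (auto simp: le_Suc_eq numeral_2_eq_2)

lemma dom210_function_of_bool_double_dominating_set: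
  assumes "simple_graph V E" and "double_dominating_set V E D"
  shows "dom210_function V E (\<lambda>v. of_bool (v \<in> D))"
  using assms unfolding dom210_function_iff_closed_nbhd_sum[OF assms(1)] double_dominating_set_def
  by (simp add: sum_of_bool_closed_nbhd)

lemma dom210_function_twice_of_bool_dominating_set:
  assumes "simple_graph V E" and "dominating_set V E D"
  shows "dom210_function V E (\<lambda>v. 2 * of_bool (v \<in> D))"
proof -
  have "finite (closed_nbhd V E v \<inter> D)" for v
    using assms(1) unfolding closed_nbhd_def by (simp add: finite_open_nbhd)
  then show ?thesis
    using assms unfolding dom210_function_iff_closed_nbhd_sum[OF assms(1)] dominating_set_def
    by (simp add: sum_distrib_left[symmetric] sum_of_bool_closed_nbhd Suc_le_eq card_gt_0_iff)
qed

lemma dom210_function_without_2_double_dominating: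
  assumes "simple_graph V E" and "dom210_function V E f" and "\<forall>v\<in>V. f v \<le> 1"
  shows "double_dominating_set V E {v\<in>V. f v = 1}"
  unfolding double_dominating_set_def
proof (intro conjI ballI)
  fix v assume "v \<in> V"
  have "f u = of_bool (u \<in> {v\<in>V. f v = 1})" if "u \<in> closed_nbhd V E v" for u
  proof -
    have "u \<in> V" using that closed_nbhd_subset[OF \<open>v \<in> V\<close>] by blast
    with assms(3) show ?thesis by (cases "f u") auto
  qed
  then have "card (closed_nbhd V E v \<inter> {v\<in>V. f v = 1}) = (\<Sum>u\<in>closed_nbhd V E v. f u)"
    using sum_of_bool_closed_nbhd[OF assms(1)] by (metis (no_types, lifting) sum.cong)
  also have "\<dots> \<ge> 2"
    using assms(2) \<open>v \<in> V\<close> unfolding dom210_function_iff_closed_nbhd_sum[OF assms(1)] by blast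
  finally show "2 \<le> card (closed_nbhd V E v \<inter> {v\<in>V. f v = 1})" .
qed simp

lemma dom210_function_heavy_vertex_dominating:
  assumes "simple_graph V E" and "dom210_function V E f"
    and "a \<in> V" and "f a = 2" and "(\<Sum>v\<in>V. f v) \<le> 3"
  shows "dominating_set V E {a}"
  unfolding dominating_set_def
proof (intro conjI ballI)
  fix v assume "v \<in> V"
  show "closed_nbhd V E v \<inter> {a} \<noteq> {}"
  proof
    assume "closed_nbhd V E v \<inter> {a} = {}"
    then have "closed_nbhd V E v \<subseteq> V - {a}"
      using closed_nbhd_subset[OF \<open>v \<in> V\<close>] by blast
    have "finite V" using assms(1) unfolding simple_graph_def by blast
    have "2 \<le> (\<Sum>u\<in>closed_nbhd V E v. f u)"
      using assms(2) \<open>v \<in> V\<close> unfolding dom210_function_iff_closed_nbhd_sum[OF assms(1)] by blast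
    also have "\<dots> \<le> (\<Sum>u\<in>V - {a}. f u)"
      using \<open>closed_nbhd V E v \<subseteq> V - {a}\<close> \<open>finite V\<close> by (intro sum_mono2) auto
    also have "\<dots> = (\<Sum>u\<in>V. f u) - f a"
      using \<open>finite V\<close> \<open>a \<in> V\<close> by (simp add: sum.remove)
    finally show False using assms(4,5) by linarith
  qed
qed (use assms(3) in simp)

lemma dominating_set_vertex_set: "dominating_set V E V"
  unfolding dominating_set_def closed_nbhd_def by blast

lemma double_dominating_set_vertex_set:
  assumes "simple_graph V E" and "no_isolated V E"
  shows "double_dominating_set V E V"
  unfolding double_dominating_set_def
proof (intro conjI ballI)
  fix v assume "v \<in> V"
  then obtain u where u: "u \<in> open_nbhd V E v"
    using assms(2) unfolding no_isolated_def by blast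
  then have "u \<noteq> v" using not_in_open_nbhd[OF assms(1)] by blast
  have "{u, v} \<subseteq> closed_nbhd V E v \<inter> V"
    using u \<open>v \<in> V\<close> closed_nbhd_subset[OF \<open>v \<in> V\<close>] unfolding closed_nbhd_def by blast
  moreover have "finite (closed_nbhd V E v \<inter> V)"
    using assms(1) unfolding simple_graph_def by blast
  ultimately have "card {u, v} \<le> card (closed_nbhd V E v \<inter> V)"
    by (rule card_mono[rotated])
  with \<open>u \<noteq> v\<close> show "2 \<le> card (closed_nbhd V E v \<inter> V)" by simp
qed simp

lemma double_dominating_set_imp_no_isolated:
  assumes "double_dominating_set V E D"
  shows "no_isolated V E"
  unfolding no_isolated_def
proof
  fix v assume "v \<in> V"
  show "open_nbhd V E v \<noteq> {}"
  proof
    assume "open_nbhd V E v = {}"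
    then have "card (closed_nbhd V E v \<inter> D) \<le> card {v}"
      unfolding closed_nbhd_def by (intro card_mono) auto
    with assms \<open>v \<in> V\<close> show False unfolding double_dominating_set_def by fastforce
  qed
qed

lemma double_dominating_set_Diff_singleton_dominating:
  assumes "double_dominating_set V E D"
  shows "dominating_set V E (D - {z})"
  unfolding dominating_set_def
proof (intro conjI ballI)
  show "D - {z} \<subseteq> V" using assms unfolding double_dominating_set_def by blast
  fix v assume "v \<in> V"
  show "closed_nbhd V E v \<inter> (D - {z}) \<noteq> {}"
  proof
    assume "closed_nbhd V E v \<inter> (D - {z}) = {}"
    then have "card (closed_nbhd V E v \<inter> D) \<le> card {z}"
      by (intro card_mono) auto
    with assms \<open>v \<in> V\<close> show False unfolding double_dominating_set_def by fastforce
  qed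
qed

lemma domination_number_le_card:
  "dominating_set V E D \<Longrightarrow> domination_number V E \<le> card D"
  unfolding domination_number_def by (rule Least_le) blast

lemma double_domination_number_le_card:
  "double_dominating_set V E D \<Longrightarrow> double_domination_number V E \<le> card D"
  unfolding double_domination_number_def by (rule Least_le) blast

lemma dom210_number_le_weight:
  "dom210_function V E f \<Longrightarrow> dom210_number V E \<le> (\<Sum>v\<in>V. f v)"
  unfolding dom210_number_def by (rule Least_le) blast

lemma domination_number_attained:
  "\<exists>D. dominating_set V E D \<and> card D = domination_number V E"
  unfolding domination_number_def by (rule LeastI_ex) (use dominating_set_vertex_set in blast)

lemma dom210_number_attained:
  "\<exists>f. dom210_function V E f \<and> (\<Sum>v\<in>V. f v) = dom210_number V E"
proof -
  have "dom210_function V E (\<lambda>_. 2)" unfolding dom210_function_def by simp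
  show ?thesis
    unfolding dom210_number_def by (rule LeastI_ex) (use \<open>dom210_function V E (\<lambda>_. 2)\<close> in blast)
qed

lemma dom210_number_le_twice_domination_number:
  assumes "simple_graph V E"
  shows "dom210_number V E \<le> 2 * domination_number V E"
proof -
  obtain D where D: "dominating_set V E D" "card D = domination_number V E"
    using domination_number_attained by blast
  have "finite V" "D \<subseteq> V" using assms D(1) unfolding simple_graph_def dominating_set_def by blast+
  then have "(\<Sum>v\<in>V. 2 * of_bool (v \<in> D)) = 2 * card D"
    by (simp add: sum_distrib_left[symmetric] sum_of_bool_eq Int_absorb1 Collect_mem_eq)
  then show ?thesis
    using dom210_number_le_weight[OF dom210_function_twice_of_bool_dominating_set[OF assms D(1)]] D(2)
    by simp
qed

lemma dom210_number_le_double_domination_number: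
  assumes "simple_graph V E" and "no_isolated V E"
  shows "dom210_number V E \<le> double_domination_number V E"
proof -
  have "\<exists>D. double_dominating_set V E D \<and> card D = double_domination_number V E"
    unfolding double_domination_number_def
    by (rule LeastI_ex) (use double_dominating_set_vertex_set[OF assms] in blast)
  then obtain D where D: "double_dominating_set V E D" "card D = double_domination_number V E"
    by blast
  have "finite V" "D \<subseteq> V" using assms D(1) unfolding simple_graph_def double_dominating_set_def by blast+
  then have "(\<Sum>v\<in>V. of_bool (v \<in> D)) = card D"
    by (simp add: sum_of_bool_eq Int_absorb1 Collect_mem_eq)
  then show ?thesis
    using dom210_number_le_weight[OF dom210_function_of_bool_double_dominating_set[OF assms(1) D(1)]] D(2)
    by simp
qed

lemma dom210_number_le_3_cases:
  assumes "simple_graph V E" and "dom210_number V E \<le> 3"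
  shows "domination_number V E \<le> 1
    \<or> (\<exists>D. double_dominating_set V E D \<and> card D = dom210_number V E)"
proof -
  obtain f where f: "dom210_function V E f" "(\<Sum>v\<in>V. f v) = dom210_number V E"
    using dom210_number_attained by blast
  show ?thesis
  proof (cases "\<exists>a\<in>V. f a = 2")
    case True
    then obtain a where "dominating_set V E {a}"
      using dom210_function_heavy_vertex_dominating[OF assms(1) f(1)] f(2) assms(2) by auto
    then show ?thesis using domination_number_le_card by fastforce
  next
    case False
    let ?D = "{v\<in>V. f v = 1}"
    have "\<forall>v\<in>V. f v \<le> 1"
      using False f(1) unfolding dom210_function_def by (auto simp: le_Suc_eq numeral_2_eq_2)
    then have "dom210_number V E = (\<Sum>v\<in>V. of_bool (v \<in> ?D))"
      unfolding f(2)[symmetric] by (intro sum.cong) (auto simp: le_Suc_eq)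
    also have "\<dots> = card ?D"
      using assms(1) unfolding simple_graph_def by (simp add: sum_of_bool_eq Int_def)
    finally show ?thesis
      using dom210_function_without_2_double_dominating[OF assms(1) f(1) \<open>\<forall>v\<in>V. f v \<le> 1\<close>] by auto
  qed
qed

lemma domination_number_le_card_double_dominating_set:
  assumes "double_dominating_set V E D"
  shows "domination_number V E \<le> card D - 1"
proof (cases "D = {}")
  case True
  then show ?thesis using assms domination_number_le_card[of V E D]
    unfolding double_dominating_set_def dominating_set_def by auto
next
  case False
  then obtain z where "z \<in> D" by blast
  then show ?thesis
    using domination_number_le_card[OF double_dominating_set_Diff_singleton_dominating[OF assms, of z]]
    by simp
qed

theorem theorem37:
  fixes V :: "'a set" and E :: "'a \<Rightarrow> 'a \<Rightarrow> bool"
  assumes "simple_graph V E"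
  shows "dom210_number V E = 3 \<longleftrightarrow>
         (no_isolated V E \<and> double_domination_number V E = 3 \<and> domination_number V E + 1 = 3)"
proof
  assume "dom210_number V E = 3"
  then have "domination_number V E \<ge> 2"
    using dom210_number_le_twice_domination_number[OF assms] by linarith
  with dom210_number_le_3_cases[OF assms] \<open>dom210_number V E = 3\<close>
  obtain D where D: "double_dominating_set V E D" "card D = 3"
    by auto
  then have "no_isolated V E" using double_dominating_set_imp_no_isolated by blast
  then show "no_isolated V E \<and> double_domination_number V E = 3 \<and> domination_number V E + 1 = 3"
    using dom210_number_le_double_domination_number[OF assms] double_domination_number_le_card[OF D(1)]
      domination_number_le_card_double_dominating_set[OF D(1)] D(2)
      \<open>dom210_number V E = 3\<close> \<open>domination_number V E \<ge> 2\<close>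
    by fastforce
next
  assume "no_isolated V E \<and> double_domination_number V E = 3 \<and> domination_number V E + 1 = 3"
  then have "no_isolated V E" "double_domination_number V E = 3" "domination_number V E = 2"
    by simp_all
  then have "dom210_number V E \<le> 3"
    using dom210_number_le_double_domination_number[OF assms] by fastforce
  with dom210_number_le_3_cases[OF assms] \<open>domination_number V E = 2\<close>
  obtain D where "double_dominating_set V E D" "card D = dom210_number V E"
    by auto
  then show "dom210_number V E = 3"
    using double_domination_number_le_card \<open>double_domination_number V E = 3\<close> \<open>dom210_number V E \<le> 3\<close>
    by fastforce
qed

end
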